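(* Suppose Assumptions 1 and 2 hold. Let $0<C<K$ be integers and consider $x_{k+1}=x_k-\delta_k\,\mathrm{sign}(v_k)$ for a fixed positive sequence $(\delta_k)$, where each $v_k\in\mathbb{R}^d$ is a measurable, square-integrable function of the entire history up to time $k$ (including $x_1,\dots,x_k$, $v_1,\dots,v_{k-1}$ and all stochastic gradient oracle calls up to time $k$). Let $g_k=\nabla f(x_k)$. Assume that for $k=C,C+1,\dots,K$, $$\mathbb{E}\Big[\sum_{i=1}^d|g_{k,i}|\,\mathbb{P}[\mathrm{sign}(v_{k,i})\neq\mathrm{sign}(g_{k,i})\mid x_k]\Big]\le\xi(k),$$ where $\xi(k)\to0$ as $k\to\infty$. Then, with $f_C:=\mathbb{E}[f(x_C)]$, $$\frac{1}{K-C}\sum_{k=C}^{K-1}\mathbb{E}\|g_k\|_1\le\frac{f_C-f_*+2\sum_{k=C}^{K-1}\delta_k\xi(k)+\sum_{k=C}^{K-1}\frac{\delta_k^2\|\vec L\|_1}{2}}{(K-C)\min_{C\le k\le K-1}\delta_k}.$$ In particular, if $\delta_k=\delta/\sqrt k$ and $\xi(k)=\kappa/\sqrt k$ for constants $\delta>0$, $\kappa\ge0$, then $$\frac{1}{K-C}\sum_{k=C}^{K-1}\mathbb{E}\|g_k\|_1\le\frac{\frac{f_C-f_*}{\delta}+(2\kappa+\|\vec L\|_1\delta/2)(\log K+1)}{\sqrt K-\frac{C}{\sqrt K}}.$$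
   Context: $f:\mathbb{R}^d\to\mathbb{R}$ is differentiable with gradient $g(x)=\nabla f(x)$. Assumption 1: there is a constant $f_*$ with $f(x)\ge f_*$ for all $x$. Assumption 2: there is a vector $\vec L=(L_1,\dots,L_d)$ of non-negative constants such that for all $x,y$, $\big|f(y)-f(x)-g(x)^T(y-x)\big|\le \frac12\sum_{i=1}^d L_i(y_i-x_i)^2$. $\mathrm{sign}$ acts componentwise with $\mathrm{sign}(0)=0$; $v_{k,i}$, $g_{k,i}$ denote $i$-th components. *)

theory Defs
  imports "HOL-Probability.Probability"
begin

definition sign_vec :: "real^'n \<Rightarrow> real^'n" where
  "sign_vec v = (\<chi> i. sgn (v $ i))"

definition l1norm :: "real^'n \<Rightarrow> real" where
  "l1norm v = (\<Sum>i\<in>UNIV. \<bar>v $ i\<bar>)"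

end

theory Submission
  imports Defs
begin

text \<open>
  By the smoothness bound, a sign step of length \<open>\<delta> k\<close> decreases \<open>f\<close> by at least
  \<open>\<delta> k * l1norm (g (x k))\<close>, up to \<open>2 * \<delta> k\<close> times the mass of \<open>\<bar>g (x k) $ i\<bar>\<close> on the
  coordinates whose sign is wrong, and up to the curvature term \<open>\<delta> k ^ 2 * l1norm L / 2\<close>.
  As \<open>\<bar>g (x k) $ i\<bar>\<close> is a function of \<open>x k\<close>, in expectation the wrong-sign indicator may be
  replaced by its conditional probability given \<open>x k\<close>, which the hypothesis controls by \<open>\<xi> k\<close>.
  Telescoping from \<open>C\<close> to \<open>K\<close> against \<open>f \<ge> fstar\<close> bounds the \<open>l1\<close>-gradients weighted by the
  smallest step; for \<open>\<delta> k = d / sqrt k\<close> and \<open>\<xi> k = \<kappa> / sqrt k\<close> the remaining sums are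
  harmonic, hence at most \<open>ln K + 1\<close>. All expectations exist since smoothness and
  \<open>f \<ge> fstar\<close> give \<open>\<bar>g y $ i\<bar> \<le> f y - fstar + L $ i / 2\<close>, so integrability of \<open>f (x k)\<close>
  propagates along the iteration.
\<close>

definition coordinatewise_smooth ::
    "(real^'n \<Rightarrow> real) \<Rightarrow> (real^'n \<Rightarrow> real^'n) \<Rightarrow> real^'n \<Rightarrow> bool" where
  "coordinatewise_smooth f g L \<longleftrightarrow>
     (\<forall>y z. \<bar>f z - f y - g y \<bullet> (z - y)\<bar> \<le> 1/2 * (\<Sum>i\<in>UNIV. L $ i * (z $ i - y $ i)^2))"

lemma coordinatewise_smoothD:
  "coordinatewise_smooth f g L \<Longrightarrow>
     \<bar>f z - f y - g y \<bullet> (z - y)\<bar> \<le> 1/2 * (\<Sum>i\<in>UNIV. L $ i * (z $ i - y $ i)^2)"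
  unfolding coordinatewise_smooth_def by blast

lemma l1norm_nonneg: "l1norm v \<ge> 0"
  unfolding l1norm_def by (simp add: sum_nonneg)

lemma l1norm_eq_sum: "(\<And>i. v $ i \<ge> 0) \<Longrightarrow> l1norm v = (\<Sum>i\<in>UNIV. v $ i)"
  unfolding l1norm_def by simp

lemma sgn_mismatch_bound:
  fixes a b :: real
  shows "- (a * sgn b) \<le> - \<bar>a\<bar> + 2 * \<bar>a\<bar> * of_bool (sgn b \<noteq> sgn a)"
  by (cases "b = 0"; cases "a = 0"; auto simp: sgn_if)

lemma sign_step_descent:
  assumes smooth: "coordinatewise_smooth f g L" and L: "\<And>i. L $ i \<ge> 0" and "\<delta> \<ge> 0"
  shows "f (y - \<delta> *\<^sub>R sign_vec w) \<le> f y - \<delta> * l1norm (g y)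
     + 2 * \<delta> * (\<Sum>i | sgn (w $ i) \<noteq> sgn (g y $ i). \<bar>g y $ i\<bar>)
     + \<delta>^2 * l1norm L / 2"
proof -
  define z where "z = y - \<delta> *\<^sub>R sign_vec w"
  have "g y \<bullet> (z - y) = \<delta> * (\<Sum>i\<in>UNIV. - (g y $ i * sgn (w $ i)))"
    by (simp add: z_def inner_vec_def sign_vec_def sum_distrib_left sum_negf algebra_simps)
  also have "\<dots> \<le> \<delta> * (\<Sum>i\<in>UNIV. - \<bar>g y $ i\<bar> + 2 * \<bar>g y $ i\<bar> * of_bool (sgn (w $ i) \<noteq> sgn (g y $ i)))"
    using \<open>\<delta> \<ge> 0\<close> by (intro mult_left_mono sum_mono sgn_mismatch_bound)
  also have "\<dots> = - \<delta> * l1norm (g y)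
      + 2 * \<delta> * (\<Sum>i\<in>UNIV. \<bar>g y $ i\<bar> * of_bool (sgn (w $ i) \<noteq> sgn (g y $ i)))"
    unfolding l1norm_def sum.distrib sum_negf sum_distrib_left[symmetric] mult.assoc
    by (simp add: algebra_simps)
  also have "\<dots> = - \<delta> * l1norm (g y)
      + 2 * \<delta> * (\<Sum>i | sgn (w $ i) \<noteq> sgn (g y $ i). \<bar>g y $ i\<bar>)"
    by simp
  finally have linear: "g y \<bullet> (z - y) \<le> \<dots>" .
  have "(\<Sum>i\<in>UNIV. L $ i * (z $ i - y $ i)^2) \<le> (\<Sum>i\<in>UNIV. L $ i * \<delta>^2)"
  proof (intro sum_mono mult_left_mono)
    show "(z $ i - y $ i)^2 \<le> \<delta>^2" for i
      using \<open>\<delta> \<ge> 0\<close> by (simp add: z_def sign_vec_def power_mult_distrib sgn_if)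
  qed (use L in auto)
  also have "\<dots> = \<delta>^2 * l1norm L"
    by (simp add: l1norm_eq_sum[OF L] sum_distrib_right mult.commute)
  finally have quadratic: "(\<Sum>i\<in>UNIV. L $ i * (z $ i - y $ i)^2) \<le> \<delta>^2 * l1norm L" .
  show ?thesis
    using coordinatewise_smoothD[OF smooth, of z y] linear quadratic
    unfolding z_def[symmetric] by linarith
qed

lemma sum_scaled_axis_sq: "(\<Sum>j\<in>UNIV. L $ j * ((t *\<^sub>R axis i 1 :: real^'n) $ j)^2) = L $ i * t^2"
proof -
  have "L $ j * ((t *\<^sub>R axis i 1 :: real^'n) $ j)^2 = (if j = i then L $ i * t^2 else 0)" for j
    by (simp add: axis_def)
  then show ?thesis by simp
qed

lemma smooth_gradient_component_bound:
  assumes smooth: "coordinatewise_smooth f g L" and L: "\<And>i. L $ i \<ge> 0"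
    and lower: "\<And>y. fstar \<le> f y"
  shows "\<bar>g y $ i\<bar> \<le> f y - fstar + L $ i / 2"
proof -
  define t where "t = - sgn (g y $ i)"
  define z where "z = y + t *\<^sub>R axis i 1"
  have "g y \<bullet> (z - y) = - \<bar>g y $ i\<bar>"
    by (simp add: z_def t_def inner_axis abs_sgn mult.commute)
  moreover have "(\<Sum>j\<in>UNIV. L $ j * (z $ j - y $ j)^2) \<le> L $ i"
    using sum_scaled_axis_sq[of L t i] L[of i] by (simp add: z_def t_def sgn_if)
  ultimately show ?thesis
    using coordinatewise_smoothD[OF smooth, of z y] lower[of z] by linarith
qed

lemma smooth_difference_quotient_tendsto:
  assumes smooth: "coordinatewise_smooth f g L"
  shows "(\<lambda>n. real (Suc n) * (f (y + (1 / real (Suc n)) *\<^sub>R axis i 1) - f y)) \<longlonglongrightarrow> g y $ i"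
proof (rule LIM_zero_cancel, rule Lim_null_comparison)
  show "\<forall>\<^sub>F n in sequentially.
      norm (real (Suc n) * (f (y + (1 / real (Suc n)) *\<^sub>R axis i 1) - f y) - g y $ i)
        \<le> L $ i / 2 * inverse (real (Suc n))"
  proof (rule always_eventually, rule allI)
    fix n
    define t where "t = 1 / real (Suc n)"
    have "\<bar>f (y + t *\<^sub>R axis i 1) - f y - t * g y $ i\<bar> \<le> L $ i * t^2 / 2"
      using coordinatewise_smoothD[OF smooth, of "y + t *\<^sub>R axis i 1" y] sum_scaled_axis_sq[of L t i]
      by (simp add: inner_axis mult.commute)
    then have "real (Suc n) * \<bar>f (y + t *\<^sub>R axis i 1) - f y - t * g y $ i\<bar>
        \<le> real (Suc n) * (L $ i * t^2 / 2)"
      by (intro mult_left_mono) auto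
    then show "norm (real (Suc n) * (f (y + (1 / real (Suc n)) *\<^sub>R axis i 1) - f y) - g y $ i)
        \<le> L $ i / 2 * inverse (real (Suc n))"
      by (simp add: t_def abs_mult[symmetric] power2_eq_square field_simps del: of_nat_Suc)
  qed
  show "(\<lambda>n. L $ i / 2 * inverse (real (Suc n))) \<longlonglongrightarrow> 0"
    by (intro tendsto_mult_right_zero LIMSEQ_inverse_real_of_nat)
qed

lemma smooth_gradient_component_measurable:
  fixes f :: "real^'n \<Rightarrow> real"
  assumes smooth: "coordinatewise_smooth f g L" and f: "f \<in> borel_measurable borel"
  shows "(\<lambda>y. g y $ i) \<in> borel_measurable borel"
proof (rule borel_measurable_LIMSEQ_real[OF smooth_difference_quotient_tendsto[OF smooth]])
  fix n
  have "(\<lambda>y. y + (1 / real (Suc n)) *\<^sub>R axis i 1 :: real^'n) \<in> borel_measurable borel"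
    by (intro borel_measurable_continuous_onI continuous_intros)
  with f show "(\<lambda>y. real (Suc n) * (f (y + (1 / real (Suc n)) *\<^sub>R axis i 1) - f y)) \<in> borel_measurable borel"
    by measurable
qed

lemma subalgebra_vimage_algebra:
  "X \<in> measurable M N \<Longrightarrow> subalgebra M (vimage_algebra (space M) X N)"
  unfolding subalgebra_def by (simp add: sets_image_in_sets)

lemma integrable_real_between:
  fixes h :: "'a \<Rightarrow> real"
  assumes "integrable M lo" "integrable M hi" "h \<in> borel_measurable M"
    and "\<And>\<omega>. \<omega> \<in> space M \<Longrightarrow> lo \<omega> \<le> h \<omega> \<and> h \<omega> \<le> hi \<omega>"
  shows "integrable M h"
proof (rule Bochner_Integration.integrable_bound[where f="\<lambda>\<omega>. \<bar>lo \<omega>\<bar> + \<bar>hi \<omega>\<bar>"])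
  show "AE \<omega> in M. norm (h \<omega>) \<le> norm (\<bar>lo \<omega>\<bar> + \<bar>hi \<omega>\<bar>)"
    using assms(4) by (intro AE_I2) fastforce
qed (use assms in auto)

lemma harm_le_ln_plus_one:
  assumes "n > 0" shows "harm n \<le> ln (real n) + (1::real)"
  using euler_mascheroni_sequence_decreasing[of 1 n] assms by (simp add: harm_def)

lemma sum_inverse_le_ln_plus_one:
  assumes "0 < C" "C \<le> K"
  shows "(\<Sum>k\<in>{C..<K}. 1 / real k) \<le> ln (real K) + 1"
proof -
  have "(\<Sum>k\<in>{C..<K}. 1 / real k) \<le> harm K"
    unfolding harm_def inverse_eq_divide using assms by (intro sum_mono2) auto
  also have "\<dots> \<le> ln (real K) + 1"
    using assms by (intro harm_le_ln_plus_one) auto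
  finally show ?thesis .
qed

lemma min_weighted_sum_le_telescoping:
  fixes a e w b :: "nat \<Rightarrow> real"
  assumes "C < K"
    and e_nonneg: "\<And>k. C \<le> k \<Longrightarrow> k < K \<Longrightarrow> e k \<ge> 0"
    and descent: "\<And>k. C \<le> k \<Longrightarrow> k < K \<Longrightarrow> w k * e k \<le> a k - a (Suc k) + b k"
    and "lo \<le> a K"
  shows "Min (w ` {C..<K}) * (\<Sum>k\<in>{C..<K}. e k) \<le> a C - lo + (\<Sum>k\<in>{C..<K}. b k)"
proof -
  have "Min (w ` {C..<K}) * (\<Sum>k\<in>{C..<K}. e k) = (\<Sum>k\<in>{C..<K}. Min (w ` {C..<K}) * e k)"
    by (simp add: sum_distrib_left)
  also have "\<dots> \<le> (\<Sum>k\<in>{C..<K}. w k * e k)"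
    using e_nonneg by (intro sum_mono mult_right_mono) auto
  also have "\<dots> \<le> (\<Sum>k\<in>{C..<K}. a k - a (Suc k) + b k)"
    using descent by (intro sum_mono) auto
  also have "\<dots> = a C - a K + (\<Sum>k\<in>{C..<K}. b k)"
    using sum_Suc_diff'[of C K a] \<open>C < K\<close>
    by (simp add: sum.distrib sum_subtractf)
  finally show ?thesis using \<open>lo \<le> a K\<close> by linarith
qed

lemma average_le_divide_min:
  fixes m r E N :: real
  assumes "0 < m" "0 < r" "m * E \<le> N"
  shows "1 / r * E \<le> N / (r * m)"
  using assms by (simp add: field_simps mult.commute)

lemma sqrt_schedule_average_bound:
  fixes \<delta> \<xi> :: "nat \<Rightarrow> real"
  assumes CK: "0 < C" "C < K" and "d > 0" "\<kappa> \<ge> 0" "l \<ge> 0" "E \<ge> 0"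
    and \<delta>: "\<forall>k\<ge>1. \<delta> k = d / sqrt (real k)" and \<xi>: "\<forall>k\<ge>1. \<xi> k = \<kappa> / sqrt (real k)"
    and bound: "Min (\<delta> ` {C..<K}) * E
      \<le> A + 2 * (\<Sum>k\<in>{C..<K}. \<delta> k * \<xi> k) + (\<Sum>k\<in>{C..<K}. \<delta> k ^ 2 * l / 2)"
  shows "1 / real (K - C) * E
    \<le> (A / d + (2 * \<kappa> + l * d / 2) * (ln (real K) + 1)) / (sqrt (real K) - real C / sqrt (real K))"
proof -
  define H where "H = (\<Sum>k\<in>{C..<K}. 1 / real k)"
  define R where "R = A / d + (2 * \<kappa> + l * d / 2) * (ln (real K) + 1)"
  have sK: "sqrt (real K) > 0" using CK by simp
  have "d / sqrt (real K) \<le> Min (\<delta> ` {C..<K})"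
  proof (subst Min_ge_iff, safe)
    fix k assume "k \<in> {C..<K}"
    then have "d / sqrt (real K) \<le> d / sqrt (real k)"
      using CK \<open>d > 0\<close> by (intro divide_left_mono) auto
    then show "d / sqrt (real K) \<le> \<delta> k"
      using \<delta> \<open>k \<in> {C..<K}\<close> CK by auto
  qed (use CK in auto)
  then have "d / sqrt (real K) * E \<le> Min (\<delta> ` {C..<K}) * E"
    using \<open>E \<ge> 0\<close> by (rule mult_right_mono)
  also have "\<dots> \<le> A + (2 * d * \<kappa> + d^2 * l / 2) * H"
  proof -
    have "(\<Sum>k\<in>{C..<K}. \<delta> k * \<xi> k) = d * \<kappa> * H"
      unfolding H_def sum_distrib_left using CK \<delta> \<xi> by (intro sum.cong) auto
    moreover have "(\<Sum>k\<in>{C..<K}. \<delta> k ^ 2 * l / 2) = d^2 * l / 2 * H"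
      unfolding H_def sum_distrib_left using CK \<delta> by (intro sum.cong) (auto simp: power_divide)
    ultimately show ?thesis
      using bound by (simp add: algebra_simps)
  qed
  also have "\<dots> \<le> A + (2 * d * \<kappa> + d^2 * l / 2) * (ln (real K) + 1)"
    using sum_inverse_le_ln_plus_one[of C K] CK \<open>d > 0\<close> \<open>\<kappa> \<ge> 0\<close> \<open>l \<ge> 0\<close>
    unfolding H_def by (intro add_left_mono mult_left_mono) auto
  also have "\<dots> = d * R"
    using \<open>d > 0\<close> by (simp add: R_def power2_eq_square field_simps)
  finally have "E \<le> sqrt (real K) * R"
    using \<open>d > 0\<close> sK by (simp add: field_simps)
  then have "1 / real (K - C) * E \<le> sqrt (real K) * R / real (K - C)"
    using CK by (simp add: divide_right_mono)
  also have "\<dots> = R / (sqrt (real K) - real C / sqrt (real K))"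
    using sK CK by (simp add: field_simps of_nat_diff)
  finally show ?thesis unfolding R_def .
qed

locale sign_descent_process = prob_space M
  for M :: "'a measure" +
  fixes f :: "real^'n \<Rightarrow> real" and g :: "real^'n \<Rightarrow> real^'n" and fstar :: real
    and L :: "real^'n" and x v :: "nat \<Rightarrow> 'a \<Rightarrow> real^'n" and \<delta> :: "nat \<Rightarrow> real"
  assumes f_borel: "f \<in> borel_measurable borel"
    and lower_bound: "\<And>y. fstar \<le> f y"
    and L_nonneg: "\<And>i. 0 \<le> L $ i"
    and smooth: "coordinatewise_smooth f g L"
    and x_measurable [measurable]: "\<And>k. x k \<in> borel_measurable M"
    and v_measurable [measurable]: "\<And>k. v k \<in> borel_measurable M"
    and \<delta>_nonneg: "\<And>k. 1 \<le> k \<Longrightarrow> 0 \<le> \<delta> k"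
    and step: "\<And>k \<omega>. 1 \<le> k \<Longrightarrow> \<omega> \<in> space M \<Longrightarrow>
      x (Suc k) \<omega> = x k \<omega> - \<delta> k *\<^sub>R sign_vec (v k \<omega>)"
begin

definition mismatch :: "nat \<Rightarrow> 'n \<Rightarrow> 'a set" where
  "mismatch k i = {\<omega> \<in> space M. sgn (v k \<omega> $ i) \<noteq> sgn (g (x k \<omega>) $ i)}"

lemma f_x_measurable [measurable]: "(\<lambda>\<omega>. f (x k \<omega>)) \<in> borel_measurable M"
  using measurable_compose[OF x_measurable f_borel] .

lemma gradient_x_measurable [measurable]: "(\<lambda>\<omega>. g (x k \<omega>) $ i) \<in> borel_measurable M"
  using measurable_compose[OF x_measurable smooth_gradient_component_measurable[OF smooth f_borel]] .

lemma mismatch_sets [measurable]: "mismatch k i \<in> sets M"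
proof -
  have [measurable]: "(\<lambda>\<omega>. v k \<omega> $ i) \<in> borel_measurable M"
    using measurable_compose[OF v_measurable borel_measurable_nth] by simp
  show ?thesis unfolding mismatch_def by measurable
qed

lemma mismatch_le_l1norm:
  "(\<Sum>i\<in>UNIV. \<bar>g (x k \<omega>) $ i\<bar> * indicator (mismatch k i) \<omega>) \<le> l1norm (g (x k \<omega>))"
  unfolding l1norm_def by (intro sum_mono) (auto simp: indicator_def)

lemma pathwise_descent:
  assumes "1 \<le> k" "\<omega> \<in> space M"
  shows "f (x (Suc k) \<omega>) \<le> f (x k \<omega>) - \<delta> k * l1norm (g (x k \<omega>))
    + 2 * \<delta> k * (\<Sum>i\<in>UNIV. \<bar>g (x k \<omega>) $ i\<bar> * indicator (mismatch k i) \<omega>)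
    + \<delta> k ^ 2 * l1norm L / 2"
  using sign_step_descent[OF smooth L_nonneg \<delta>_nonneg[OF assms(1)], of "x k \<omega>" "v k \<omega>"] assms
  by (simp add: step mismatch_def)

lemma integrable_gradient_component:
  assumes "integrable M (\<lambda>\<omega>. f (x k \<omega>))"
  shows "integrable M (\<lambda>\<omega>. \<bar>g (x k \<omega>) $ i\<bar>)"
  by (rule integrable_real_between[where lo="\<lambda>_. 0" and hi="\<lambda>\<omega>. f (x k \<omega>) - fstar + L $ i / 2"])
    (use assms smooth_gradient_component_bound[OF smooth L_nonneg lower_bound] in auto)

lemma integrable_l1norm_gradient:
  "integrable M (\<lambda>\<omega>. f (x k \<omega>)) \<Longrightarrow> integrable M (\<lambda>\<omega>. l1norm (g (x k \<omega>)))"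
  unfolding l1norm_def by (intro Bochner_Integration.integrable_sum integrable_gradient_component)

lemma integrable_mismatch:
  "integrable M (\<lambda>\<omega>. f (x k \<omega>)) \<Longrightarrow>
     integrable M (\<lambda>\<omega>. \<bar>g (x k \<omega>) $ i\<bar> * indicator (mismatch k i) \<omega>)"
  by (intro integrable_real_mult_indicator mismatch_sets integrable_gradient_component)

lemma integrable_f_x_Suc:
  assumes k: "1 \<le> k" and int: "integrable M (\<lambda>\<omega>. f (x k \<omega>))"
  shows "integrable M (\<lambda>\<omega>. f (x (Suc k) \<omega>))"
proof (rule integrable_real_between[where lo="\<lambda>_. fstar"
      and hi="\<lambda>\<omega>. f (x k \<omega>) + \<delta> k * l1norm (g (x k \<omega>)) + \<delta> k ^ 2 * l1norm L / 2"])
  fix \<omega> assume "\<omega> \<in> space M"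
  then show "fstar \<le> f (x (Suc k) \<omega>) \<and>
      f (x (Suc k) \<omega>) \<le> f (x k \<omega>) + \<delta> k * l1norm (g (x k \<omega>)) + \<delta> k ^ 2 * l1norm L / 2"
    using lower_bound[of "x (Suc k) \<omega>"] pathwise_descent[OF k \<open>\<omega> \<in> space M\<close>]
      mult_left_mono[OF mismatch_le_l1norm[of k \<omega>] \<delta>_nonneg[OF k]]
    by linarith
qed (use int integrable_l1norm_gradient[OF int] in auto)

lemma integrable_f_x:
  assumes "1 \<le> C" "integrable M (\<lambda>\<omega>. f (x C \<omega>))" "C \<le> k"
  shows "integrable M (\<lambda>\<omega>. f (x k \<omega>))"
  using \<open>C \<le> k\<close>
proof (induction k rule: dec_induct)
  case (step k)
  then show ?case using \<open>1 \<le> C\<close> by (intro integrable_f_x_Suc) auto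
qed (use assms in auto)

lemma expected_descent:
  assumes k: "1 \<le> k" and int: "integrable M (\<lambda>\<omega>. f (x k \<omega>))"
  shows "\<delta> k * (\<integral>\<omega>. l1norm (g (x k \<omega>)) \<partial>M) \<le>
    (\<integral>\<omega>. f (x k \<omega>) \<partial>M) - (\<integral>\<omega>. f (x (Suc k) \<omega>) \<partial>M)
    + 2 * \<delta> k * (\<Sum>i\<in>UNIV. \<integral>\<omega>. \<bar>g (x k \<omega>) $ i\<bar> * indicator (mismatch k i) \<omega> \<partial>M)
    + \<delta> k ^ 2 * l1norm L / 2"
proof -
  define S where "S \<omega> = (\<Sum>i\<in>UNIV. \<bar>g (x k \<omega>) $ i\<bar> * indicator (mismatch k i) \<omega>)" for \<omega>
  have int_S: "integrable M S"
    unfolding S_def by (intro Bochner_Integration.integrable_sum integrable_mismatch[OF int])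
  have int_l1: "integrable M (\<lambda>\<omega>. l1norm (g (x k \<omega>)))"
    by (rule integrable_l1norm_gradient[OF int])
  have "(\<integral>\<omega>. f (x (Suc k) \<omega>) \<partial>M) \<le> (\<integral>\<omega>. f (x k \<omega>) - \<delta> k * l1norm (g (x k \<omega>))
      + 2 * \<delta> k * S \<omega> + \<delta> k ^ 2 * l1norm L / 2 \<partial>M)"
    using pathwise_descent[OF k] int int_l1 int_S integrable_f_x_Suc[OF k int]
    unfolding S_def[symmetric] by (intro integral_mono) auto
  also have "\<dots> = (\<integral>\<omega>. f (x k \<omega>) \<partial>M) - \<delta> k * (\<integral>\<omega>. l1norm (g (x k \<omega>)) \<partial>M)
      + 2 * \<delta> k * (\<integral>\<omega>. S \<omega> \<partial>M) + \<delta> k ^ 2 * l1norm L / 2"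
    using int int_l1 int_S by (simp add: prob_space)
  also have "(\<integral>\<omega>. S \<omega> \<partial>M)
      = (\<Sum>i\<in>UNIV. \<integral>\<omega>. \<bar>g (x k \<omega>) $ i\<bar> * indicator (mismatch k i) \<omega> \<partial>M)"
    unfolding S_def by (intro Bochner_Integration.integral_sum integrable_mismatch[OF int])
  finally show ?thesis by linarith
qed

lemma integral_gradient_cond_exp_mismatch:
  assumes int: "integrable M (\<lambda>\<omega>. f (x k \<omega>))"
  shows "(\<integral>\<omega>. (\<Sum>i\<in>UNIV. \<bar>g (x k \<omega>) $ i\<bar> *
      real_cond_exp M (vimage_algebra (space M) (x k) borel) (indicator (mismatch k i)) \<omega>) \<partial>M)
    = (\<Sum>i\<in>UNIV. \<integral>\<omega>. \<bar>g (x k \<omega>) $ i\<bar> * indicator (mismatch k i) \<omega> \<partial>M)"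
proof -
  let ?N = "vimage_algebra (space M) (x k) borel"
  interpret finite_measure_subalgebra M ?N
    by unfold_locales (rule subalgebra_vimage_algebra[OF x_measurable])
  have "(\<lambda>\<omega>. \<bar>g (x k \<omega>) $ i\<bar>) \<in> borel_measurable ?N" for i
    using measurable_compose[OF measurable_vimage_algebra1
        smooth_gradient_component_measurable[OF smooth f_borel]]
    by (intro borel_measurable_abs) auto
  note cond_exp = real_cond_exp_intg[OF integrable_mismatch[OF int] this borel_measurable_indicator[OF mismatch_sets]]
  show ?thesis
    using cond_exp by (simp add: Bochner_Integration.integral_sum)
qed

lemma min_step_weighted_gradient_sum_le:
  fixes \<xi> :: "nat \<Rightarrow> real"
  assumes "1 \<le> C" "C < K" and int_C: "integrable M (\<lambda>\<omega>. f (x C \<omega>))"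
    and mismatch_bound: "\<And>k. C \<le> k \<Longrightarrow> k < K \<Longrightarrow>
      (\<Sum>i\<in>UNIV. \<integral>\<omega>. \<bar>g (x k \<omega>) $ i\<bar> * indicator (mismatch k i) \<omega> \<partial>M) \<le> \<xi> k"
  shows "Min (\<delta> ` {C..<K}) * (\<Sum>k\<in>{C..<K}. \<integral>\<omega>. l1norm (g (x k \<omega>)) \<partial>M)
    \<le> (\<integral>\<omega>. f (x C \<omega>) \<partial>M) - fstar + 2 * (\<Sum>k\<in>{C..<K}. \<delta> k * \<xi> k)
      + (\<Sum>k\<in>{C..<K}. \<delta> k ^ 2 * l1norm L / 2)"
proof -
  define a where "a k = (\<integral>\<omega>. f (x k \<omega>) \<partial>M)" for k
  define e where "e k = (\<integral>\<omega>. l1norm (g (x k \<omega>)) \<partial>M)" for k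
  have int: "integrable M (\<lambda>\<omega>. f (x k \<omega>))" if "C \<le> k" for k
    using integrable_f_x[OF \<open>1 \<le> C\<close> int_C that] .
  have "Min (\<delta> ` {C..<K}) * (\<Sum>k\<in>{C..<K}. e k)
      \<le> a C - fstar + (\<Sum>k\<in>{C..<K}. 2 * (\<delta> k * \<xi> k) + \<delta> k ^ 2 * l1norm L / 2)"
  proof (rule min_weighted_sum_le_telescoping)
    fix k assume k: "C \<le> k" "k < K"
    then have "2 * \<delta> k * (\<Sum>i\<in>UNIV. \<integral>\<omega>. \<bar>g (x k \<omega>) $ i\<bar> * indicator (mismatch k i) \<omega> \<partial>M)
        \<le> 2 * (\<delta> k * \<xi> k)"
      using mismatch_bound \<delta>_nonneg[of k] \<open>1 \<le> C\<close> by (simp add: mult_left_mono)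
    then show "\<delta> k * e k \<le> a k - a (Suc k) + (2 * (\<delta> k * \<xi> k) + \<delta> k ^ 2 * l1norm L / 2)"
      using expected_descent[OF _ int[OF k(1)]] k \<open>1 \<le> C\<close> unfolding a_def e_def by fastforce
  next
    show "0 \<le> e k" for k
      unfolding e_def by (intro integral_nonneg_AE) (simp add: l1norm_nonneg)
    show "fstar \<le> a K"
      unfolding a_def using int[of K] \<open>C < K\<close> lower_bound by (intro integral_ge_const) auto
  qed (rule \<open>C < K\<close>)
  then show ?thesis
    unfolding a_def e_def by (simp add: sum.distrib sum_distrib_left)
qed

end

theorem lemma2:
  fixes f :: "real^'n \<Rightarrow> real" and g :: "real^'n \<Rightarrow> real^'n"
    and fstar :: real and L :: "real^'n"
    and M :: "'a measure" and F :: "nat \<Rightarrow> 'a measure"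
    and x v :: "nat \<Rightarrow> 'a \<Rightarrow> real^'n"
    and \<delta> \<xi> :: "nat \<Rightarrow> real" and C K :: nat
  assumes P: "prob_space M"
    and grad: "\<And>y. (f has_derivative (\<lambda>h. g y \<bullet> h)) (at y)"
    and A1: "\<And>y. f y \<ge> fstar"
    and L_nonneg: "\<And>i. L $ i \<ge> 0"
    and A2: "\<And>y z. \<bar>f z - f y - g y \<bullet> (z - y)\<bar> \<le> 1/2 * (\<Sum>i\<in>UNIV. L $ i * (z $ i - y $ i)^2)"
    and CK: "0 < C" "C < K"
    and \<delta>_pos: "\<And>k. k \<ge> 1 \<Longrightarrow> \<delta> k > 0"
    and F_sub: "\<And>k. subalgebra M (F k)"
    and F_mono: "\<And>k. sets (F k) \<subseteq> sets (F (Suc k))"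
    and x_meas: "\<And>k. x k \<in> borel_measurable (F k)"
    and v_meas: "\<And>k. v k \<in> borel_measurable (F k)"
    and v_sq: "\<And>k. integrable M (\<lambda>\<omega>. (norm (v k \<omega>))^2)"
    and step: "\<And>k \<omega>. k \<ge> 1 \<Longrightarrow> \<omega> \<in> space M \<Longrightarrow>
                 x (Suc k) \<omega> = x k \<omega> - \<delta> k *\<^sub>R sign_vec (v k \<omega>)"
    and fC_int: "integrable M (\<lambda>\<omega>. f (x C \<omega>))"
    and \<xi>_lim: "\<xi> \<longlonglongrightarrow> 0"
    and hyp: "\<And>k. C \<le> k \<Longrightarrow> k \<le> K \<Longrightarrow>
       (\<integral>\<omega>. (\<Sum>i\<in>UNIV. \<bar>g (x k \<omega>) $ i\<bar> *
           real_cond_exp M (vimage_algebra (space M) (x k) borel)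
             (indicator {\<omega>'\<in>space M. sgn (v k \<omega>' $ i) \<noteq> sgn (g (x k \<omega>') $ i)}) \<omega>) \<partial>M)
       \<le> \<xi> k"
  shows "(1 / real (K - C)) * (\<Sum>k\<in>{C..<K}. \<integral>\<omega>. l1norm (g (x k \<omega>)) \<partial>M)
           \<le> ((\<integral>\<omega>. f (x C \<omega>) \<partial>M) - fstar + 2 * (\<Sum>k\<in>{C..<K}. \<delta> k * \<xi> k)
               + (\<Sum>k\<in>{C..<K}. \<delta> k ^ 2 * l1norm L / 2))
             / (real (K - C) * Min (\<delta> ` {C..<K}))
       \<and> (\<forall>d \<kappa>. d > 0 \<longrightarrow> \<kappa> \<ge> 0 \<longrightarrow> (\<forall>k\<ge>1. \<delta> k = d / sqrt (real k))
             \<longrightarrow> (\<forall>k\<ge>1. \<xi> k = \<kappa> / sqrt (real k)) \<longrightarrow>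
           (1 / real (K - C)) * (\<Sum>k\<in>{C..<K}. \<integral>\<omega>. l1norm (g (x k \<omega>)) \<partial>M)
             \<le> (((\<integral>\<omega>. f (x C \<omega>) \<partial>M) - fstar) / d
                 + (2 * \<kappa> + l1norm L * d / 2) * (ln (real K) + 1))
               / (sqrt (real K) - real C / sqrt (real K)))"
proof -
  interpret sign_descent_process M f g fstar L x v \<delta>
  proof (intro sign_descent_process.intro[OF P] sign_descent_process_axioms.intro)
    show "f \<in> borel_measurable borel"
      by (intro borel_measurable_continuous_onI continuous_at_imp_continuous_on ballI
          has_derivative_continuous[OF grad])
    show "coordinatewise_smooth f g L"
      using A2 unfolding coordinatewise_smooth_def by blast
    show "x k \<in> borel_measurable M" "v k \<in> borel_measurable M" for k
      using measurable_from_subalg[OF F_sub x_meas] measurable_from_subalg[OF F_sub v_meas] by auto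
    show "1 \<le> k \<Longrightarrow> 0 \<le> \<delta> k" for k
      using \<delta>_pos by (simp add: less_imp_le)
  qed (use A1 L_nonneg step in auto)
  have int: "integrable M (\<lambda>\<omega>. f (x k \<omega>))" if "C \<le> k" for k
    using integrable_f_x[OF _ fC_int that] CK by simp
  have weighted: "Min (\<delta> ` {C..<K}) * (\<Sum>k\<in>{C..<K}. \<integral>\<omega>. l1norm (g (x k \<omega>)) \<partial>M)
    \<le> (\<integral>\<omega>. f (x C \<omega>) \<partial>M) - fstar + 2 * (\<Sum>k\<in>{C..<K}. \<delta> k * \<xi> k)
      + (\<Sum>k\<in>{C..<K}. \<delta> k ^ 2 * l1norm L / 2)"
  proof (rule min_step_weighted_gradient_sum_le[OF _ \<open>C < K\<close> fC_int])
    fix k assume "C \<le> k" "k < K"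
    then show "(\<Sum>i\<in>UNIV. \<integral>\<omega>. \<bar>g (x k \<omega>) $ i\<bar> * indicator (mismatch k i) \<omega> \<partial>M) \<le> \<xi> k"
      using hyp[of k] integral_gradient_cond_exp_mismatch[OF int] unfolding mismatch_def by simp
  qed (use CK in simp)
  have "0 < Min (\<delta> ` {C..<K})"
    using CK \<delta>_pos by (subst Min_gr_iff) auto
  moreover have "0 \<le> (\<Sum>k\<in>{C..<K}. \<integral>\<omega>. l1norm (g (x k \<omega>)) \<partial>M)"
    by (intro sum_nonneg integral_nonneg_AE) (simp add: l1norm_nonneg)
  ultimately show ?thesis
    using average_le_divide_min[OF _ _ weighted] CK
      sqrt_schedule_average_bound[OF CK _ _ l1norm_nonneg _ _ _ weighted]
    by (simp del: Min_gr_iff)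
qed

end
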